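(* Let $(\mathcal{O},g,f)$ be an oriented matroid program with $\mathcal{O}$ of rank $r\ge 3$, and let $(C,X,Y)$ be a modular triple of cocircuits such that $z(C\circ X\circ Y)$ is a flat of rank $r-3$ of $\mathcal{M}(\mathcal{O})$, with $C_g=X_g=Y_g=+$. Let $e\in\operatorname{supp}(C)$ with $(X\circ Y)_e=0$. Let $X^1$ be obtained by cocircuit elimination of $g$ between $-X$ and $C$, and $Y^1$ by cocircuit elimination of $g$ between $-Y$ and $C$. Then $X^1\circ Y^1$ is an edge, and $X\to_{g,f}Y \iff Y^1\to_{e,f}X^1 \iff -X^1\to_{e,f}-Y^1.$
   Context: Oriented matroid $\mathcal{O}$ of rank $r$ on finite $E$, given by its cocircuits (sign vectors in $\{+,-,0\}^E$), underlying matroid $\mathcal{M}(\mathcal{O})$. Notation: $\operatorname{supp}(X)$, $z(X)=E\setminus\operatorname{supp}(X)$, $\operatorname{sep}(X,Y)=\{e:X_e=-Y_e\ne0\}$, $(X\circ Y)_e=X_e$ if $X_e\ne0$, else $Y_e$. An edge is a covector whose zero set is a flat of rank $r-2$; cocircuits $X\ne\pm Y$ are comodular if $X\circ Y$ is an edge. A modular triple of cocircuits $(C,X,Y)$ is one in which each of the three pairs is comodular. For comodular $X,Y$ and $e\in\operatorname{sep}(X,Y)$, cocircuit elimination of $e$ between $X$ and $Y$ yields the unique cocircuit $Z$ with $Z_e=0$ and $Z_h=(X\circ Y)_h$ for $h\notin\operatorname{sep}(X,Y)$. An oriented matroid program $(\mathcal{O},g,f)$: $g\neq f\in E$, $g$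 not a loop, $f$ not a coloop. For distinct $a,b\in E$ and comodular $X,Y$ with $X_a=Y_a\ne0$, let $Z$ be obtained by eliminating $a$ between $-X$ and $Y$; write $X\to_{a,b}Y$ if $Z_b=+$, $X\leftarrow_{a,b}Y$ if $Z_b=-$, $X\leftrightarrow_{a,b}Y$ if $Z_b=0$. *)

theory Defs
  imports Main
begin

datatype sign = Neg | Zer | Pos

fun sneg :: "sign \<Rightarrow> sign" where
  "sneg Neg = Pos" | "sneg Zer = Zer" | "sneg Pos = Neg"

type_synonym 'a svec = "'a \<Rightarrow> sign"

definition zerovec :: "'a svec" where "zerovec = (\<lambda>_. Zer)"

definition vneg :: "'a svec \<Rightarrow> 'a svec" where "vneg X = (\<lambda>e. sneg (X e))"

definition supp :: "'a svec \<Rightarrow> 'a set" where "supp X = {e. X e \<noteq> Zer}"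

definition zset :: "'a set \<Rightarrow> 'a svec \<Rightarrow> 'a set" where "zset E X = E - supp X"

definition sep :: "'a svec \<Rightarrow> 'a svec \<Rightarrow> 'a set" where
  "sep X Y = {e. X e \<noteq> Zer \<and> Y e = sneg (X e)}"

definition comp :: "'a svec \<Rightarrow> 'a svec \<Rightarrow> 'a svec" where
  "comp X Y = (\<lambda>e. if X e \<noteq> Zer then X e else Y e)"

definition oriented_matroid :: "'a set \<Rightarrow> 'a svec set \<Rightarrow> bool" where
  "oriented_matroid E CC \<longleftrightarrow>
     finite E \<and>
     (\<forall>X\<in>CC. supp X \<subseteq> E) \<and>
     zerovec \<notin> CC \<and>
     (\<forall>X\<in>CC. vneg X \<in> CC) \<and>
     (\<forall>X\<in>CC. \<forall>Y\<in>CC. supp X \<subseteq> supp Y \<longrightarrow> X = Y \<or> X = vneg Y) \<and>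
     (\<forall>X\<in>CC. \<forall>Y\<in>CC. \<forall>e\<in>sep X Y. X \<noteq> vneg Y \<longrightarrow>
        (\<exists>Z\<in>CC. Z e = Zer \<and>
           (\<forall>h. Z h = Pos \<longrightarrow> X h = Pos \<or> Y h = Pos) \<and>
           (\<forall>h. Z h = Neg \<longrightarrow> X h = Neg \<or> Y h = Neg)))"

inductive covector :: "'a svec set \<Rightarrow> 'a svec \<Rightarrow> bool" for CC where
  covector_zero: "covector CC zerovec"
| covector_comp: "X \<in> CC \<Longrightarrow> covector CC V \<Longrightarrow> covector CC (comp X V)"

text \<open>Hyperplanes of M(O) are the complements of the cocircuit supports; flats are
  intersections of (families of) hyperplanes, the empty intersection being E.\<close>
definition hyperplanes :: "'a set \<Rightarrow> 'a svec set \<Rightarrow> 'a set set" where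
  "hyperplanes E CC = zset E ` CC"

definition flats :: "'a set \<Rightarrow> 'a svec set \<Rightarrow> 'a set set" where
  "flats E CC = {E \<inter> \<Inter>H | H. H \<subseteq> hyperplanes E CC}"

text \<open>Rank of a flat F = height of F in the lattice of flats, i.e. the maximal length
  of a strictly increasing chain of flats ending in F.\<close>
definition flat_rank :: "'a set \<Rightarrow> 'a svec set \<Rightarrow> 'a set \<Rightarrow> nat" where
  "flat_rank E CC F = Max {length L - 1 | L. L \<noteq> [] \<and> set L \<subseteq> flats E CC \<and>
                              sorted_wrt (\<subset>) L \<and> last L = F}"

definition om_rank :: "'a set \<Rightarrow> 'a svec set \<Rightarrow> nat" where
  "om_rank E CC = flat_rank E CC E"

definition is_flat_of_rank :: "'a set \<Rightarrow> 'a svec set \<Rightarrow> 'a set \<Rightarrow> nat \<Rightarrow> bool" where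
  "is_flat_of_rank E CC F k \<longleftrightarrow> F \<in> flats E CC \<and> flat_rank E CC F = k"

definition is_edge :: "'a set \<Rightarrow> 'a svec set \<Rightarrow> 'a svec \<Rightarrow> bool" where
  "is_edge E CC V \<longleftrightarrow> covector CC V \<and> is_flat_of_rank E CC (zset E V) (om_rank E CC - 2)"

definition comodular :: "'a set \<Rightarrow> 'a svec set \<Rightarrow> 'a svec \<Rightarrow> 'a svec \<Rightarrow> bool" where
  "comodular E CC X Y \<longleftrightarrow> X \<in> CC \<and> Y \<in> CC \<and> X \<noteq> Y \<and> X \<noteq> vneg Y \<and> is_edge E CC (comp X Y)"

definition modular_triple :: "'a set \<Rightarrow> 'a svec set \<Rightarrow> 'a svec \<Rightarrow> 'a svec \<Rightarrow> 'a svec \<Rightarrow> bool" where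
  "modular_triple E CC C X Y \<longleftrightarrow>
     comodular E CC C X \<and> comodular E CC C Y \<and> comodular E CC X Y"

definition elim :: "'a set \<Rightarrow> 'a svec set \<Rightarrow> 'a svec \<Rightarrow> 'a svec \<Rightarrow> 'a \<Rightarrow> 'a svec" where
  "elim E CC X Y e = (THE Z. Z \<in> CC \<and> Z e = Zer \<and>
                        (\<forall>h\<in>E. h \<notin> sep X Y \<longrightarrow> Z h = comp X Y h))"

definition is_loop :: "'a svec set \<Rightarrow> 'a \<Rightarrow> bool" where
  "is_loop CC e \<longleftrightarrow> (\<forall>X\<in>CC. X e = Zer)"

text \<open>f is a coloop of M(O) iff {f} is a cocircuit of M(O).\<close>
definition is_coloop :: "'a svec set \<Rightarrow> 'a \<Rightarrow> bool" where
  "is_coloop CC e \<longleftrightarrow> (\<exists>X\<in>CC. supp X = {e})"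

definition om_program :: "'a set \<Rightarrow> 'a svec set \<Rightarrow> 'a \<Rightarrow> 'a \<Rightarrow> bool" where
  "om_program E CC g f \<longleftrightarrow> oriented_matroid E CC \<and> g \<in> E \<and> f \<in> E \<and> g \<noteq> f \<and>
     \<not> is_loop CC g \<and> \<not> is_coloop CC f"

definition arrow_base :: "'a set \<Rightarrow> 'a svec set \<Rightarrow> 'a \<Rightarrow> 'a \<Rightarrow> 'a svec \<Rightarrow> 'a svec \<Rightarrow> bool" where
  "arrow_base E CC a b X Y \<longleftrightarrow> a \<in> E \<and> b \<in> E \<and> a \<noteq> b \<and> comodular E CC X Y \<and>
      X a = Y a \<and> X a \<noteq> Zer"

definition arrow :: "'a set \<Rightarrow> 'a svec set \<Rightarrow> 'a \<Rightarrow> 'a \<Rightarrow> 'a svec \<Rightarrow> 'a svec \<Rightarrow> bool" where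
  "arrow E CC a b X Y \<longleftrightarrow> arrow_base E CC a b X Y \<and> elim E CC (vneg X) Y a b = Pos"

end

theory Submission
  imports Defs
begin

(* Two cocircuits vanishing on a flat L of rank r - 2 and on one further element are equal up to
   sign, since otherwise the flats L, z(W1) \<inter> z(W2), z(W1), E would form too long a chain. This
   makes cocircuit elimination well defined for comodular pairs.
   X1 and Y1 vanish on the rank r - 3 flat F = z(C o X o Y) and at g, and they differ at an element
   a of z(C) \<inter> z(X) outside z(Y); hence M = z(X1) \<inter> z(Y1) has rank r - 2 and X1 o Y1 is an edge.
   The elimination Z of g between -X and Y vanishes on F and at g, hence on all of M, and at e; so
   does the elimination of e between -Y1 and X1, and both take the value Y_a at a. Thus they are
   the same cocircuit, and all three arrows are read off from its sign at f. *)

lemma sneg_sneg [simp]: "sneg (sneg s) = s"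
  by (cases s) auto

lemma sneg_eq_Zer_iff [simp]: "sneg s = Zer \<longleftrightarrow> s = Zer"
  by (cases s) auto

lemma sneg_eq_self_iff [simp]: "sneg s = s \<longleftrightarrow> s = Zer"
  by (cases s) auto

lemma vneg_apply [simp]: "vneg X e = sneg (X e)"
  by (simp add: vneg_def)

lemma vneg_vneg [simp]: "vneg (vneg X) = X"
  by (simp add: vneg_def)

lemma vneg_eq_vneg_iff [simp]: "vneg A = vneg B \<longleftrightarrow> A = B"
  by (metis vneg_vneg)

lemma zset_vneg [simp]: "zset E (vneg X) = zset E X"
  by (simp add: zset_def supp_def)

lemma mem_zset: "h \<in> zset E X \<longleftrightarrow> h \<in> E \<and> X h = Zer"
  by (simp add: zset_def supp_def)

lemma zset_comp: "zset E (comp A B) = zset E A \<inter> zset E B"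
  by (auto simp: zset_def supp_def comp_def)

lemma sep_sym: "sep A B = sep B A"
  unfolding sep_def by (auto; case_tac "A x"; case_tac "B x"; simp)

lemma comp_commute_off_sep: "h \<notin> sep A B \<Longrightarrow> comp A B h = comp B A h"
  unfolding sep_def comp_def by (cases "A h"; cases "B h") auto

lemma supp_subset_if_conformal_to_both:
  assumes "\<And>k. Z k = Zer \<or> Z k = A k \<or> Z k = B k"
    and "\<And>k. Z k = Zer \<or> Z k = A k \<or> Z k = sneg (B k)"
  shows "supp Z \<subseteq> supp A"
proof
  fix k assume "k \<in> supp Z"
  then show "k \<in> supp A"
    using assms[of k] by (cases "Z k"; cases "B k") (auto simp: supp_def)
qed

lemma zsets_subset_zset_if_conformal:
  assumes "\<And>k. Z k = Zer \<or> Z k = A k \<or> Z k = B k"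
  shows "zset E A \<inter> zset E B \<subseteq> zset E Z"
proof
  fix k assume "k \<in> zset E A \<inter> zset E B"
  then show "k \<in> zset E Z" using assms[of k] by (auto simp: mem_zset)
qed

lemma covector_comp_cocircuits: "X \<in> CC \<Longrightarrow> Y \<in> CC \<Longrightarrow> covector CC (comp X Y)"
proof -
  assume "X \<in> CC" "Y \<in> CC"
  then have "covector CC (comp X (comp Y zerovec))"
    by (intro covector.intros)
  moreover have "comp Y zerovec = Y"
    by (simp add: comp_def zerovec_def fun_eq_iff)
  ultimately show ?thesis by simp
qed

section \<open>Flats and their rank\<close>

lemma E_in_flats: "E \<in> flats E CC"
  unfolding flats_def by blast

lemma zset_in_flats: "X \<in> CC \<Longrightarrow> zset E X \<in> flats E CC"
  unfolding flats_def hyperplanes_def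
  by (rule CollectI, rule exI[of _ "{zset E X}"]) (auto simp: zset_def)

lemma flats_Int: "F \<in> flats E CC \<Longrightarrow> G \<in> flats E CC \<Longrightarrow> F \<inter> G \<in> flats E CC"
  unfolding flats_def
proof clarify
  fix H1 H2 assume "H1 \<subseteq> hyperplanes E CC" "H2 \<subseteq> hyperplanes E CC"
  then show "\<exists>H. E \<inter> \<Inter> H1 \<inter> (E \<inter> \<Inter> H2) = E \<inter> \<Inter> H \<and> H \<subseteq> hyperplanes E CC"
    by (intro exI[of _ "H1 \<union> H2"]) auto
qed

lemma flats_subset: "F \<in> flats E CC \<Longrightarrow> F \<subseteq> E"
  unfolding flats_def by auto

lemma distinct_if_sorted_psubset: "sorted_wrt (\<subset>) (L :: 'b set list) \<Longrightarrow> distinct L"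
  by (induction L) auto

lemma subset_last_if_sorted_psubset:
  "sorted_wrt (\<subset>) (L :: 'b set list) \<Longrightarrow> x \<in> set L \<Longrightarrow> x \<subseteq> last L"
proof (induction L)
  case (Cons y ys)
  then show ?case
    by (cases "ys = []") (auto dest: last_in_set)
qed simp

lemma finite_flat_chain_lengths:
  assumes "finite E"
  shows "finite {length L - 1 | L. L \<noteq> [] \<and> set L \<subseteq> flats E CC \<and> sorted_wrt (\<subset>) L \<and> last L = F}"
proof (rule finite_subset[of _ "{..card (Pow E)}"])
  show "{length L - 1 | L. L \<noteq> [] \<and> set L \<subseteq> flats E CC \<and> sorted_wrt (\<subset>) L \<and> last L = F}
      \<subseteq> {..card (Pow E)}"
  proof clarify
    fix L :: "'a set list" assume "set L \<subseteq> flats E CC" "sorted_wrt (\<subset>) L"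
    then have "distinct L" "set L \<subseteq> Pow E"
      using distinct_if_sorted_psubset flats_subset by blast+
    then have "length L \<le> card (Pow E)"
      using assms card_mono[of "Pow E" "set L"] distinct_card[of L] by simp
    then show "length L - 1 \<le> card (Pow E)" by simp
  qed
qed simp

lemma flat_rank_psubset:
  assumes fin: "finite E" and F: "F \<in> flats E CC" and G: "G \<in> flats E CC" and "F \<subset> G"
  shows "flat_rank E CC F < flat_rank E CC G"
proof -
  let ?S = "\<lambda>F. {length L - 1 | L. L \<noteq> [] \<and> set L \<subseteq> flats E CC \<and> sorted_wrt (\<subset>) L \<and> last L = F}"
  have "0 \<in> ?S F"
    using F by (intro CollectI exI[of _ "[F]"]) auto
  then have "flat_rank E CC F \<in> ?S F"
    unfolding flat_rank_def using finite_flat_chain_lengths[OF fin] by (intro Max_in) auto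
  then obtain L where L: "L \<noteq> []" "set L \<subseteq> flats E CC" "sorted_wrt (\<subset>) L" "last L = F"
    and rank_F: "flat_rank E CC F = length L - 1" by auto
  have "sorted_wrt (\<subset>) (L @ [G])"
    using L \<open>F \<subset> G\<close> subset_last_if_sorted_psubset[OF L(3)] by (auto simp: sorted_wrt_append)
  then have "length (L @ [G]) - 1 \<in> ?S G"
    using L G by (intro CollectI exI[of _ "L @ [G]"]) auto
  then have "length L \<le> flat_rank E CC G"
    unfolding flat_rank_def using finite_flat_chain_lengths[OF fin] by (auto intro: Max_ge)
  then show ?thesis using rank_F L(1) by (cases L) auto
qed

lemma flat_eq_if_rank_covers:
  assumes "finite E" "F \<in> flats E CC" "P \<in> flats E CC" "G \<in> flats E CC"
    and "F \<subset> P" "P \<subseteq> G" "flat_rank E CC G \<le> Suc (flat_rank E CC F)"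
  shows "P = G"
  using assms flat_rank_psubset[of E F CC P] flat_rank_psubset[of E P CC G] by fastforce

section \<open>Comodular pairs and elimination\<close>

lemma comodular_iff:
  "comodular E CC A B \<longleftrightarrow> A \<in> CC \<and> B \<in> CC \<and> A \<noteq> B \<and> A \<noteq> vneg B \<and>
     is_flat_of_rank E CC (zset E A \<inter> zset E B) (om_rank E CC - 2)"
  by (auto simp: comodular_def is_edge_def zset_comp intro: covector_comp_cocircuits)

lemma comodular_sym: "comodular E CC A B \<Longrightarrow> comodular E CC B A"
  unfolding comodular_iff by (auto simp: Int_commute)

definition is_elim :: "'a set \<Rightarrow> 'a svec set \<Rightarrow> 'a svec \<Rightarrow> 'a svec \<Rightarrow> 'a \<Rightarrow> 'a svec \<Rightarrow> bool" where
  "is_elim E CC A B a Z \<longleftrightarrow> Z \<in> CC \<and> Z a = Zer \<and> (\<forall>h\<in>E. h \<notin> sep A B \<longrightarrow> Z h = comp A B h)"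

lemma elim_eq_The: "elim E CC A B a = (THE Z. is_elim E CC A B a Z)"
  by (simp add: elim_def is_elim_def)

lemma elim_sym: "elim E CC A B a = elim E CC B A a"
  unfolding elim_eq_The is_elim_def using sep_sym[of A B] comp_commute_off_sep[of _ A B] by metis

locale cocircuit_oriented_matroid =
  fixes E :: "'a set" and CC :: "'a svec set"
  assumes oriented_matroid: "oriented_matroid E CC"
begin

lemma finite_ground: "finite E"
  using oriented_matroid by (simp add: oriented_matroid_def)

lemma cocircuit_nonzero_in_ground: "X \<in> CC \<Longrightarrow> X h \<noteq> Zer \<Longrightarrow> h \<in> E"
  using oriented_matroid by (auto simp: oriented_matroid_def supp_def)

lemma vneg_cocircuit: "X \<in> CC \<Longrightarrow> vneg X \<in> CC"
  using oriented_matroid by (simp add: oriented_matroid_def)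

lemma zset_cocircuit_psubset: "X \<in> CC \<Longrightarrow> zset E X \<subset> E"
proof -
  assume X: "X \<in> CC"
  then have "X \<noteq> zerovec"
    using oriented_matroid by (auto simp: oriented_matroid_def)
  then obtain k where "X k \<noteq> Zer" by (auto simp: zerovec_def)
  then show ?thesis
    using cocircuit_nonzero_in_ground[OF X] by (auto simp: mem_zset)
qed

lemma cocircuit_eq_if_supp_subset:
  "X \<in> CC \<Longrightarrow> Y \<in> CC \<Longrightarrow> supp X \<subseteq> supp Y \<Longrightarrow> X = Y \<or> X = vneg Y"
  using oriented_matroid by (simp add: oriented_matroid_def)

lemma cocircuit_elimination:
  assumes "X \<in> CC" "Y \<in> CC" "X \<noteq> vneg Y" "e \<in> sep X Y"
  obtains Z where "Z \<in> CC" "Z e = Zer" "\<And>h. Z h = Zer \<or> Z h = X h \<or> Z h = Y h"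
proof -
  have "\<exists>Z\<in>CC. Z e = Zer \<and> (\<forall>h. Z h = Pos \<longrightarrow> X h = Pos \<or> Y h = Pos) \<and>
      (\<forall>h. Z h = Neg \<longrightarrow> X h = Neg \<or> Y h = Neg)"
    using oriented_matroid assms unfolding oriented_matroid_def by blast
  then obtain Z where "Z \<in> CC" "Z e = Zer"
    and "\<forall>h. Z h = Pos \<longrightarrow> X h = Pos \<or> Y h = Pos" "\<forall>h. Z h = Neg \<longrightarrow> X h = Neg \<or> Y h = Neg"
    by blast
  moreover from this have "Z h = Zer \<or> Z h = X h \<or> Z h = Y h" for h
    by (cases "Z h") auto
  ultimately show ?thesis using that by blast
qed

lemma comodular_vneg: "comodular E CC A B \<Longrightarrow> comodular E CC (vneg A) B"
  unfolding comodular_iff by (auto intro: vneg_cocircuit dest: sym[of _ "vneg _"])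

lemma cocircuit_unique_up_to_sign:
  assumes L: "is_flat_of_rank E CC L (om_rank E CC - 2)" and h: "h \<in> E" "h \<notin> L"
    and W: "W1 \<in> CC" "W2 \<in> CC" "insert h L \<subseteq> zset E W1" "insert h L \<subseteq> zset E W2"
  shows "W1 = W2 \<or> W1 = vneg W2"
proof (rule ccontr)
  assume "\<not> ?thesis"
  then have "\<not> supp W2 \<subseteq> supp W1"
    using cocircuit_eq_if_supp_subset[OF W(2,1)] by auto
  then obtain k where "k \<in> zset E W1 - zset E W2"
    using cocircuit_nonzero_in_ground[OF W(2)] by (auto simp: mem_zset supp_def)
  let ?F = "zset E W1 \<inter> zset E W2"
  have flats: "L \<in> flats E CC" "?F \<in> flats E CC" "zset E W1 \<in> flats E CC"
    using L W by (auto simp: is_flat_of_rank_def intro: flats_Int zset_in_flats)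
  have "L \<subset> ?F" "?F \<subset> zset E W1"
    using h W \<open>k \<in> _\<close> by auto
  then have "flat_rank E CC L < flat_rank E CC ?F" "flat_rank E CC ?F < flat_rank E CC (zset E W1)"
    using flats by (auto intro: flat_rank_psubset[OF finite_ground])
  moreover have "flat_rank E CC (zset E W1) < om_rank E CC"
    unfolding om_rank_def using flats zset_cocircuit_psubset[OF W(1)]
    by (intro flat_rank_psubset[OF finite_ground] E_in_flats)
  ultimately show False
    using L by (simp add: is_flat_of_rank_def)
qed

context
  fixes A B :: "'a svec" and a :: 'a
  assumes comodular: "comodular E CC A B" and a_sep: "a \<in> sep A B"
begin

lemma elimination_witness_nonzero:
  assumes Z: "Z \<in> CC" "Z a = Zer" "\<And>k. Z k = Zer \<or> Z k = A k \<or> Z k = B k"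
    and h: "h \<in> E" "h \<notin> zset E A \<inter> zset E B" "h \<notin> sep A B"
  shows "Z h \<noteq> Zer"
proof
  assume Zh: "Z h = Zer"
  let ?L = "zset E A \<inter> zset E B"
  have AB: "A \<in> CC" "B \<in> CC" "A \<noteq> B" "A \<noteq> vneg B"
    and L: "is_flat_of_rank E CC ?L (om_rank E CC - 2)"
    using comodular by (auto simp: comodular_iff)
  have a_nonzero: "A a \<noteq> Zer" "B a \<noteq> Zer"
    using a_sep by (auto simp: sep_def)
  have "insert h ?L \<subseteq> zset E Z"
    using zsets_subset_zset_if_conformal[of Z A B, OF Z(3)] Zh h(1) by (auto simp: mem_zset)
  then have sign_unique: "W = Z \<or> W = vneg Z" if "W \<in> CC" "insert h ?L \<subseteq> zset E W" for W
    using cocircuit_unique_up_to_sign[OF L h(1,2) that(1) Z(1) that(2)] by blast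
  consider "A h = Zer" | "B h = Zer" | "A h = B h" "A h \<noteq> Zer"
    using h(3) by (cases "A h"; cases "B h") (auto simp: sep_def)
  then show False
  proof cases
    case 1
    then have "insert h ?L \<subseteq> zset E A" using h(1) by (auto simp: mem_zset)
    then show False using sign_unique[OF AB(1)] Z(2) a_nonzero(1) by auto
  next
    case 2
    then have "insert h ?L \<subseteq> zset E B" using h(1) by (auto simp: mem_zset)
    then show False using sign_unique[OF AB(2)] Z(2) a_nonzero(2) by auto
  next
    case 3
    \<comment> \<open>eliminating h between A and -B gives \<open>\<plusminus>Z\<close>, which confines supp Z to supp A or supp B\<close>
    then have "h \<in> sep A (vneg B)" by (simp add: sep_def)
    then obtain W where W: "W \<in> CC" "W h = Zer" "\<And>k. W k = Zer \<or> W k = A k \<or> W k = vneg B k"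
      using cocircuit_elimination[OF AB(1) vneg_cocircuit[OF AB(2)]] AB(3) by (metis vneg_vneg)
    have "insert h ?L \<subseteq> zset E W"
      using zsets_subset_zset_if_conformal[of W A "vneg B", OF W(3)] W(2) h(1) by (auto simp: mem_zset)
    then have "W = Z \<or> W = vneg Z" by (rule sign_unique[OF W(1)])
    then have "supp Z \<subseteq> supp A \<or> supp Z \<subseteq> supp B"
    proof
      assume "W = Z"
      then show ?thesis
        using supp_subset_if_conformal_to_both[of Z A B, OF Z(3) W(3)[unfolded \<open>W = Z\<close> vneg_apply]]
        by blast
    next
      assume "W = vneg Z"
      then have "Z k = Zer \<or> Z k = B k \<or> Z k = sneg (A k)" for k
        using W(3)[of k] by (cases "Z k"; cases "A k"; cases "B k") auto
      then show ?thesis using supp_subset_if_conformal_to_both[of Z B A] Z(3) by blast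
    qed
    then have "Z = A \<or> Z = vneg A \<or> Z = B \<or> Z = vneg B"
      using cocircuit_eq_if_supp_subset[OF Z(1) AB(1)] cocircuit_eq_if_supp_subset[OF Z(1) AB(2)]
      by blast
    then show False using Z(2) a_nonzero by auto
  qed
qed

lemma is_elim_if_elimination_witness:
  assumes Z: "Z \<in> CC" "Z a = Zer" "\<And>k. Z k = Zer \<or> Z k = A k \<or> Z k = B k"
  shows "is_elim E CC A B a Z"
  unfolding is_elim_def
proof (intro conjI Z(1,2) ballI impI)
  fix h assume h: "h \<in> E" "h \<notin> sep A B"
  show "Z h = comp A B h"
  proof (cases "h \<in> zset E A \<inter> zset E B")
    case True
    then show ?thesis using Z(3)[of h] by (auto simp: mem_zset comp_def)
  next
    case False
    have "Z h \<noteq> Zer" by (rule elimination_witness_nonzero[OF Z h(1) False h(2)])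
    then show ?thesis
      using Z(3)[of h] h(2) by (cases "A h"; cases "B h") (auto simp: comp_def sep_def)
  qed
qed

lemma is_elim_unique:
  assumes Z1: "is_elim E CC A B a Z1" and Z2: "is_elim E CC A B a Z2"
  shows "Z1 = Z2"
proof -
  let ?L = "zset E A \<inter> zset E B"
  have AB: "A \<in> CC" "B \<in> CC" "A \<noteq> B" "A \<noteq> vneg B"
    and L: "is_flat_of_rank E CC ?L (om_rank E CC - 2)"
    using comodular by (auto simp: comodular_iff)
  have a: "a \<in> E" "a \<notin> ?L"
    using a_sep cocircuit_nonzero_in_ground[OF AB(1)] by (auto simp: sep_def mem_zset)
  have vanish: "insert a ?L \<subseteq> zset E Z" if "is_elim E CC A B a Z" for Z
    using that a(1) by (auto simp: is_elim_def mem_zset sep_def comp_def)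
  have "Z1 = Z2 \<or> Z1 = vneg Z2"
    using Z1 Z2 vanish[OF Z1] vanish[OF Z2] cocircuit_unique_up_to_sign[OF L a]
    by (auto simp: is_elim_def)
  moreover have "Z1 \<noteq> vneg Z2"
  proof -
    have "\<not> supp B \<subseteq> supp A"
      using cocircuit_eq_if_supp_subset[OF AB(2,1)] AB(3,4) by auto
    then obtain k where k: "B k \<noteq> Zer" "A k = Zer" by (auto simp: supp_def)
    then have "Z1 k = B k" "Z2 k = B k"
      using Z1 Z2 cocircuit_nonzero_in_ground[OF AB(2)]
      by (auto simp: is_elim_def sep_def comp_def)
    then show ?thesis using k(1) by auto
  qed
  ultimately show ?thesis by blast
qed

lemma is_elim_elim: "is_elim E CC A B a (elim E CC A B a)"
proof -
  have "A \<in> CC" "B \<in> CC" "A \<noteq> vneg B"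
    using comodular by (auto simp: comodular_iff)
  then obtain Z where "Z \<in> CC" "Z a = Zer" "\<And>k. Z k = Zer \<or> Z k = A k \<or> Z k = B k"
    using cocircuit_elimination a_sep by metis
  then have Z: "is_elim E CC A B a Z" by (rule is_elim_if_elimination_witness)
  show ?thesis
    unfolding elim_eq_The by (rule theI[of "is_elim E CC A B a" Z, OF Z]) (use Z is_elim_unique in blast)
qed

lemma elim_cocircuit: "elim E CC A B a \<in> CC"
  and elim_eq_Zer: "elim E CC A B a a = Zer"
  using is_elim_elim by (auto simp: is_elim_def)

lemma elim_eq_right: "h \<in> E \<Longrightarrow> A h = Zer \<Longrightarrow> elim E CC A B a h = B h"
  using is_elim_elim by (auto simp: is_elim_def sep_def comp_def)

lemma elim_eq_left: "h \<in> E \<Longrightarrow> B h = Zer \<Longrightarrow> elim E CC A B a h = A h"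
  using is_elim_elim by (cases "A h") (auto simp: is_elim_def sep_def comp_def)

end

lemma arrow_iff_elim:
  assumes "comodular E CC X Y" "X a = Y a" "X a \<noteq> Zer" "b \<in> E"
  shows "arrow E CC a b X Y \<longleftrightarrow> elim E CC (vneg X) Y a b = Pos"
proof -
  have "comodular E CC (vneg X) Y" "a \<in> sep (vneg X) Y"
    using comodular_vneg[OF assms(1)] assms(2,3) by (auto simp: sep_def)
  moreover have "a \<in> E"
    using assms cocircuit_nonzero_in_ground[of X a] by (simp add: comodular_iff)
  ultimately show ?thesis
    using assms elim_eq_Zer[of "vneg X" Y a] by (auto simp: arrow_def arrow_base_def)
qed

lemma arrow_swap_vneg:
  assumes "comodular E CC X Y" "X a = Y a" "X a \<noteq> Zer" "b \<in> E"
  shows "arrow E CC a b Y X \<longleftrightarrow> arrow E CC a b (vneg X) (vneg Y)"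
proof -
  have "comodular E CC (vneg X) (vneg Y)"
    using comodular_sym[OF comodular_vneg[OF comodular_sym[OF comodular_vneg[OF assms(1)]]]] by simp
  then show ?thesis
    using assms arrow_iff_elim[OF comodular_sym[OF assms(1)]] arrow_iff_elim[of "vneg X" "vneg Y" a b]
      elim_sym[of E CC X "vneg Y" a] by simp
qed

section \<open>Eliminations in a modular triple\<close>

lemma elim_neg_at_common_sign:
  assumes "comodular E CC C X" "X g = C g" "C g \<noteq> Zer"
  shows "elim E CC (vneg X) C g \<in> CC" "elim E CC (vneg X) C g g = Zer"
    and "\<And>h. h \<in> E \<Longrightarrow> X h = Zer \<Longrightarrow> elim E CC (vneg X) C g h = C h"
    and "\<And>h. h \<in> E \<Longrightarrow> C h = Zer \<Longrightarrow> elim E CC (vneg X) C g h = sneg (X h)"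
proof -
  have cm: "comodular E CC (vneg X) C"
    using comodular_vneg[OF comodular_sym[OF assms(1)]] .
  have g: "g \<in> sep (vneg X) C"
    using assms(2,3) by (simp add: sep_def)
  show "elim E CC (vneg X) C g \<in> CC" by (rule elim_cocircuit[OF cm g])
  show "elim E CC (vneg X) C g g = Zer" by (rule elim_eq_Zer[OF cm g])
  show "elim E CC (vneg X) C g h = C h" if "h \<in> E" "X h = Zer" for h
    using elim_eq_right[OF cm g that(1)] that(2) by simp
  show "elim E CC (vneg X) C g h = sneg (X h)" if "h \<in> E" "C h = Zer" for h
    using elim_eq_left[OF cm g that] by simp
qed

context
  fixes g :: 'a and C X Y :: "'a svec"
  assumes modular: "modular_triple E CC C X Y"
    and corank3: "is_flat_of_rank E CC (zset E C \<inter> zset E X \<inter> zset E Y) (om_rank E CC - 3)"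
    and rank_ge3: "om_rank E CC \<ge> 3"
    and positive: "C g = Pos" "X g = Pos" "Y g = Pos"
begin

abbreviation "X1 \<equiv> elim E CC (vneg X) C g"
abbreviation "Y1 \<equiv> elim E CC (vneg Y) C g"

lemma comodular_pairs: "comodular E CC C X" "comodular E CC C Y" "comodular E CC X Y"
  using modular by (auto simp: modular_triple_def)

lemma same_sign_at_g: "X g = C g" "Y g = C g" "X g = Y g" "C g \<noteq> Zer" "Y g \<noteq> Zer"
  using positive by simp_all

lemma g_in_ground: "g \<in> E"
  using cocircuit_nonzero_in_ground[of C g] comodular_pairs(1) positive(1)
  by (simp add: comodular_iff)

lemmas X1_props = elim_neg_at_common_sign[OF comodular_pairs(1) same_sign_at_g(1,4)]
  and Y1_props = elim_neg_at_common_sign[OF comodular_pairs(2) same_sign_at_g(2,4)]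

lemma zsets_C_X_not_subset_zset_Y:
  obtains a where "a \<in> E" "C a = Zer" "X a = Zer" "Y a \<noteq> Zer"
proof -
  have "flat_rank E CC (zset E C \<inter> zset E X) = om_rank E CC - 2"
    using comodular_pairs(1) by (simp add: comodular_iff is_flat_of_rank_def)
  then have "zset E C \<inter> zset E X \<noteq> zset E C \<inter> zset E X \<inter> zset E Y"
    using corank3 rank_ge3 by (auto simp: is_flat_of_rank_def)
  then obtain a where "a \<in> zset E C \<inter> zset E X" "a \<notin> zset E Y"
    by blast
  then show ?thesis using that by (auto simp: mem_zset)
qed

lemma comodular_elims: "comodular E CC X1 Y1"
proof -
  obtain a where a: "a \<in> E" "C a = Zer" "X a = Zer" "Y a \<noteq> Zer"
    by (rule zsets_C_X_not_subset_zset_Y)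
  let ?F = "zset E C \<inter> zset E X \<inter> zset E Y" and ?M = "zset E X1 \<inter> zset E Y1"
  have cocircuits: "X1 \<in> CC" "Y1 \<in> CC"
    using X1_props Y1_props by simp_all
  have "X1 a = Zer" "Y1 a \<noteq> Zer"
    using X1_props(3)[OF a(1,3)] Y1_props(4)[OF a(1,2)] a positive by simp_all
  then have distinct: "X1 \<noteq> Y1" "X1 \<noteq> vneg Y1" and "a \<in> zset E X1 - ?M"
    using a(1) by (auto simp: mem_zset)
  moreover have "?F \<subseteq> ?M" "g \<in> ?M - ?F"
    using X1_props Y1_props positive g_in_ground by (auto simp: mem_zset)
  ultimately have "?F \<subset> ?M" "?M \<subset> zset E X1" "zset E X1 \<subset> E"
    using zset_cocircuit_psubset[OF cocircuits(1)] by blast+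
  moreover have flats: "?F \<in> flats E CC" "?M \<in> flats E CC" "zset E X1 \<in> flats E CC"
    using corank3 cocircuits by (auto simp: is_flat_of_rank_def intro: flats_Int zset_in_flats)
  ultimately have "flat_rank E CC ?F < flat_rank E CC ?M"
    "flat_rank E CC ?M < flat_rank E CC (zset E X1)" "flat_rank E CC (zset E X1) < om_rank E CC"
    unfolding om_rank_def by (auto intro: flat_rank_psubset[OF finite_ground] E_in_flats)
  then have "flat_rank E CC ?M = om_rank E CC - 2"
    using corank3 rank_ge3 by (simp add: is_flat_of_rank_def)
  then show ?thesis
    using cocircuits distinct flats by (simp add: comodular_iff is_flat_of_rank_def)
qed

lemma elim_g_eq_elim_e:
  assumes e: "C e \<noteq> Zer" "X e = Zer" "Y e = Zer"
  shows "elim E CC (vneg X) Y g = elim E CC (vneg Y1) X1 e"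
proof -
  define Z where "Z = elim E CC (vneg X) Y g"
  define Z' where "Z' = elim E CC (vneg Y1) X1 e"
  let ?F = "zset E C \<inter> zset E X \<inter> zset E Y" and ?M = "zset E X1 \<inter> zset E Y1"
  obtain a where a: "a \<in> E" "C a = Zer" "X a = Zer" "Y a \<noteq> Zer"
    by (rule zsets_C_X_not_subset_zset_Y)
  have eE: "e \<in> E" using cocircuit_nonzero_in_ground[of C e] e(1) comodular_pairs(1)
    by (auto simp: comodular_iff)
  have M: "is_flat_of_rank E CC ?M (om_rank E CC - 2)"
    using comodular_elims by (simp add: comodular_iff)
  have "X1 e = C e" "Y1 e = C e"
    using X1_props(3) Y1_props(3) eE e positive by simp_all
  then have Z'_elim: "comodular E CC (vneg Y1) X1" "e \<in> sep (vneg Y1) X1"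
    using comodular_vneg[OF comodular_sym[OF comodular_elims]] e(1) by (auto simp: sep_def)
  have Z_props: "Z \<in> CC" "Z g = Zer" "\<And>h. h \<in> E \<Longrightarrow> X h = Zer \<Longrightarrow> Z h = Y h"
    unfolding Z_def
    using elim_neg_at_common_sign[OF comodular_sym[OF comodular_pairs(3)] same_sign_at_g(3,5)]
    by simp_all
  have Z'_props: "Z' \<in> CC" "Z' e = Zer" "?M \<subseteq> zset E Z'"
    unfolding Z'_def using Z'_elim elim_eq_left[OF Z'_elim]
    by (auto simp: mem_zset intro: elim_cocircuit elim_eq_Zer)
  have "?M \<subseteq> zset E Z"
  proof -
    \<comment> \<open>z(Z) \<inter> M contains the rank r - 3 flat F and also g, hence is all of the rank r - 2 flat M\<close>
    have "?F \<subseteq> zset E Z \<inter> ?M"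
      using Z_props(3) X1_props(3) Y1_props(3) by (auto simp: mem_zset)
    moreover have "g \<in> zset E Z \<inter> ?M - ?F"
      using Z_props(2) X1_props(2) Y1_props(2) positive g_in_ground by (auto simp: mem_zset)
    ultimately have "?F \<subset> zset E Z \<inter> ?M" by blast
    then have "zset E Z \<inter> ?M = ?M"
      using corank3 M rank_ge3 Z_props(1)
      by (intro flat_eq_if_rank_covers[OF finite_ground, of ?F])
        (auto simp: is_flat_of_rank_def intro: flats_Int zset_in_flats)
    then show ?thesis by blast
  qed
  moreover have "e \<notin> ?M" "Z e = Zer"
    using \<open>X1 e = C e\<close> e Z_props(3)[OF eE] by (auto simp: mem_zset)
  ultimately have "Z = Z' \<or> Z = vneg Z'"
    using Z'_props by (intro cocircuit_unique_up_to_sign[OF M eE _ Z_props(1)]) (auto simp: mem_zset eE)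
  moreover have "Z a = Y a" "Z' a = Y a"
    unfolding Z'_def using Z_props(3) a X1_props(3) Y1_props(4) elim_eq_left[OF Z'_elim] positive
    by simp_all
  ultimately show ?thesis
    using a(4) unfolding Z_def Z'_def by auto
qed

end

end

theorem lemma4p3:
  fixes E :: "'a set" and CC :: "'a svec set"
    and g f e :: 'a and C X Y :: "'a svec"
  assumes prog: "om_program E CC g f"
    and rk: "om_rank E CC \<ge> 3"
    and mt: "modular_triple E CC C X Y"
    and fl: "is_flat_of_rank E CC (zset E (comp C (comp X Y))) (om_rank E CC - 3)"
    and signs: "C g = Pos" "X g = Pos" "Y g = Pos"
    and e_in: "e \<in> supp C" and e_z: "comp X Y e = Zer"
  shows "is_edge E CC (comp (elim E CC (vneg X) C g) (elim E CC (vneg Y) C g))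
     \<and> (arrow E CC g f X Y
          \<longleftrightarrow> arrow E CC e f (elim E CC (vneg Y) C g) (elim E CC (vneg X) C g))
     \<and> (arrow E CC e f (elim E CC (vneg Y) C g) (elim E CC (vneg X) C g)
          \<longleftrightarrow> arrow E CC e f (vneg (elim E CC (vneg X) C g)) (vneg (elim E CC (vneg Y) C g)))"
proof -
  interpret cocircuit_oriented_matroid E CC
    using prog by unfold_locales (simp add: om_program_def)
  define X1 Y1 where "X1 = elim E CC (vneg X) C g" and "Y1 = elim E CC (vneg Y) C g"
  have fE: "f \<in> E"
    using prog by (simp add: om_program_def)
  have e: "C e \<noteq> Zer" "X e = Zer" "Y e = Zer"
    using e_in e_z by (auto simp: supp_def comp_def split: if_splits)
  have corank3: "is_flat_of_rank E CC (zset E C \<inter> zset E X \<inter> zset E Y) (om_rank E CC - 3)"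
    using fl by (simp add: zset_comp Int_assoc)
  note triple = mt corank3 rk signs
  have X1Y1: "comodular E CC X1 Y1"
    unfolding X1_def Y1_def by (rule comodular_elims[OF triple])
  have "e \<in> E"
    using cocircuit_nonzero_in_ground[of C e] e(1) mt by (simp add: modular_triple_def comodular_iff)
  then have "Y1 e = X1 e" "X1 e \<noteq> Zer"
    using X1_props(3)[OF triple] Y1_props(3)[OF triple] e unfolding X1_def Y1_def by simp_all
  have "arrow E CC g f X Y \<longleftrightarrow> elim E CC (vneg X) Y g f = Pos"
    using arrow_iff_elim[of X Y g f] fE signs mt by (simp add: modular_triple_def)
  also have "\<dots> \<longleftrightarrow> elim E CC (vneg Y1) X1 e f = Pos"
    unfolding X1_def Y1_def elim_g_eq_elim_e[OF triple e] ..
  also have "\<dots> \<longleftrightarrow> arrow E CC e f Y1 X1"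
    using arrow_iff_elim[OF comodular_sym[OF X1Y1]] \<open>Y1 e = X1 e\<close> \<open>X1 e \<noteq> Zer\<close> fE by simp
  finally show ?thesis
    using X1Y1 arrow_swap_vneg[OF X1Y1] \<open>Y1 e = X1 e\<close> \<open>X1 e \<noteq> Zer\<close> fE
    unfolding X1_def Y1_def by (simp add: comodular_def)
qed

end
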